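(* Let $d\geq1$ be an integer and, for real $n>d/2$ and $u\in[0,+\infty)$, let $$\mathscr B_{nd}(u):=(1+4u)^n\int_0^{1/4}ds\,\frac{s^{n-1}}{\sqrt{1-s}\,(1+us)^{2n-d/2}},\qquad B_{nd}:=\sup_{u\in[0,+\infty)}\mathscr B_{nd}(u).$$ Then, for fixed $d$ and $n\to+\infty$, $B_{nd}=O\big(n^{-1/2}(9/8)^n\big)$. *)

theory Defs
  imports "HOL-Analysis.Analysis" "HOL-Library.Landau_Symbols"
begin

definition calB :: "real \<Rightarrow> nat \<Rightarrow> real \<Rightarrow> real" where
  "calB n d u = (1 + 4 * u) powr n *
     integral {0..1/4} (\<lambda>t. t powr (n - 1) /
        (sqrt (1 - t) * ((1 + u * t) powr (2 * n - real d / 2))))"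

definition Bnd :: "real \<Rightarrow> nat \<Rightarrow> real" where
  "Bnd n d = (SUP u\<in>{0..}. calB n d u)"

end

theory Submission
  imports Defs "HOL-Real_Asymp.Real_Asymp"
begin

(* Write a = 1 + 4u, b = 1 + us and \<delta> = d/2. On 0 \<le> s \<le> 1/4 the ratio h = a s / b^2 never
   exceeds 16/15, and the integrand of calB factors as
     a^n s^(n-1) / b^(2n-\<delta>) = h^(n-1-\<delta>) * (a s / b)^\<delta> * a / b^2,
   where a s / b \<le> 5 and 1/sqrt(1-s) \<le> 2. Since a / b^2 integrates to a / (4 + u) \<le> 4,
   calB n d u \<le> 8 * 5^\<delta> * (16/15)^(n-1-\<delta>) uniformly in u, so B_nd = O((16/15)^n),
   which is even o(n^(-1/2) (9/8)^n). *)

(* Equality holds at u = 7/2, s = 1/4. *)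
lemma linear_times_le_square:
  fixes u s :: real
  assumes "0 \<le> u" "0 \<le> s" "s \<le> 1/4"
  shows "(1 + 4*u) * s \<le> 16/15 * (1 + u * s)^2"
proof -
  have "4 * (1 + u * s)^2 - (1 + 4*u) * s * (4 - s) = (2 - s - 2*u * s)^2"
    by (simp add: power2_eq_square algebra_simps)
  then have "(1 + 4*u) * s * (4 - s) \<le> 4 * (1 + u * s)^2"
    by (metis diff_ge_0_iff_ge zero_le_power2)
  also have "\<dots> \<le> 16/15 * (4 - s) * (1 + u * s)^2"
    using assms by (intro mult_right_mono) auto
  also have "\<dots> = (16/15 * (1 + u * s)^2) * (4 - s)"
    by simp
  finally show ?thesis
    by (rule mult_right_le_imp_le) (use assms in simp)
qed

lemma powr_ratio_factorization:
  fixes a s b n \<delta> :: real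
  assumes "0 < a" "0 < s" "0 < b"
  shows "a powr n * s powr (n - 1) / b powr (2*n - \<delta>)
       = (a * s / b^2) powr (n - 1 - \<delta>) * (a * s / b) powr \<delta> * (a / b^2)"
proof -
  have "a / b^2 = exp (ln a - ln (b^2))"
    using assms by (simp add: exp_diff)
  also have "ln (b^2) = 2 * ln b"
    using assms by (simp add: ln_realpow)
  finally have "a / b^2 = exp (ln a - 2 * ln b)" .
  then show ?thesis
    using assms
    by (simp add: powr_def ln_mult ln_div ln_realpow flip: exp_add exp_diff) (simp add: algebra_simps)
qed

lemma inverse_sqrt_one_minus_le:
  fixes s :: real
  assumes "s \<le> 3/4"
  shows "1 / sqrt (1 - s) \<le> 2"
proof -
  have "1/2 \<le> sqrt (1 - s)"
    using assms by (intro real_le_rsqrt) (simp add: power2_eq_square)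
  with assms show ?thesis
    by (simp add: divide_simps)
qed

lemma calB_integrand_le:
  fixes n u s \<delta> :: real
  assumes "0 \<le> \<delta>" "1 + \<delta> \<le> n" "0 \<le> u" "0 \<le> s" "s \<le> 1/4"
  shows "(1 + 4*u) powr n * (s powr (n - 1) / (sqrt (1 - s) * (1 + u * s) powr (2*n - \<delta>)))
       \<le> 2 * 5 powr \<delta> * (16/15) powr (n - 1 - \<delta>) * ((1 + 4*u) / (1 + u * s)^2)"
proof (cases "s = 0")
  case True
  then show ?thesis
    using assms by simp
next
  case False
  define a b where "a = 1 + 4*u" and "b = 1 + u * s"
  have pos: "0 < a" "0 < s" "0 < b" and "1 \<le> b"
    using assms False by (auto simp: a_def b_def add_pos_nonneg)
  have "a * s / b^2 \<le> 16/15"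
    using linear_times_le_square[OF assms(3-5)] pos by (simp add: a_def b_def divide_simps)
  then have ratio_powr_le: "(a * s / b^2) powr (n - 1 - \<delta>) \<le> (16/15) powr (n - 1 - \<delta>)"
    using pos assms(2) by (intro powr_mono2) auto
  have "a * s = s + 4 * (u * s)" "5 * b = 5 + 5 * (u * s)"
    by (simp_all add: a_def b_def algebra_simps)
  then have "a * s \<le> 5 * b"
    using assms mult_nonneg_nonneg[OF assms(3,4)] by linarith
  then have quotient_powr_le: "(a * s / b) powr \<delta> \<le> 5 powr \<delta>"
    using pos assms(1) by (intro powr_mono2) (auto simp: divide_simps)
  have "(1 + 4*u) powr n * (s powr (n - 1) / (sqrt (1 - s) * (1 + u * s) powr (2*n - \<delta>)))
      = 1 / sqrt (1 - s) * (a powr n * s powr (n - 1) / b powr (2*n - \<delta>))"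
    by (simp add: a_def b_def)
  also have "\<dots> = 1 / sqrt (1 - s) * ((a * s / b^2) powr (n - 1 - \<delta>) * (a * s / b) powr \<delta> * (a / b^2))"
    using powr_ratio_factorization[OF pos] by simp
  also have "\<dots> \<le> 2 * ((16/15) powr (n - 1 - \<delta>) * 5 powr \<delta> * (a / b^2))"
    using inverse_sqrt_one_minus_le[of s] assms(5) ratio_powr_le quotient_powr_le pos
    by (intro mult_mono) auto
  finally show ?thesis
    by (simp add: a_def b_def ac_simps)
qed

lemma has_integral_inverse_square:
  fixes u t :: real
  assumes "0 \<le> u" "0 \<le> t"
  shows "((\<lambda>s. 1 / (1 + u * s)^2) has_integral t / (1 + u * t)) {0..t}"
proof -
  have "((\<lambda>s. 1 / (1 + u * s)^2) has_integral t / (1 + u * t) - 0 / (1 + u * 0)) {0..t}"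
  proof (rule fundamental_theorem_of_calculus)
    fix x assume "x \<in> {0..t}"
    then have "0 < 1 + u * x"
      using assms by (simp add: add_pos_nonneg)
    then show "((\<lambda>s. s / (1 + u * s)) has_vector_derivative 1 / (1 + u * x)^2) (at x within {0..t})"
      by (auto intro!: derivative_eq_intros simp: has_real_derivative_iff_has_vector_derivative [symmetric]
          field_simps power2_eq_square)
  qed (use assms in simp)
  then show ?thesis
    by simp
qed

lemma calB_nonneg: "0 \<le> calB n d u"
proof -
  have "0 \<le> integral {0..1/4} (\<lambda>t. t powr (n - 1) /
      (sqrt (1 - t) * ((1 + u * t) powr (2 * n - real d / 2))))" (is "0 \<le> integral _ ?g")
  proof (cases "?g integrable_on {0..1/4}")
    case True
    then show ?thesis
      by (rule integral_nonneg) auto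
  qed (simp add: not_integrable_integral)
  then show ?thesis
    by (simp add: calB_def)
qed

lemma calB_le:
  assumes "1 + real d / 2 \<le> n" "0 \<le> u"
  shows "calB n d u \<le> 8 * 5 powr (real d / 2) * (16/15) powr (n - 1 - real d / 2)"
proof -
  define C where "C = 2 * 5 powr (real d / 2) * (16/15) powr (n - 1 - real d / 2)"
  define f where "f = (\<lambda>t. (1 + 4*u) powr n *
      (t powr (n - 1) / (sqrt (1 - t) * (1 + u * t) powr (2*n - real d / 2))))"
  have calB_eq: "calB n d u = integral {0..1/4} f"
    unfolding calB_def f_def by (rule integral_mult_right [symmetric])
  have majorant: "((\<lambda>t. C * (1 + 4*u) * (1 / (1 + u * t)^2)) has_integral
      C * (1 + 4*u) * (1/4 / (1 + u * (1/4)))) {0..1/4}"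
    by (intro has_integral_mult_right has_integral_inverse_square) (use assms in auto)
  have "f t \<le> C * (1 + 4*u) * (1 / (1 + u * t)^2)" if "t \<in> {0..1/4}" for t
    using calB_integrand_le[of "real d / 2" n u t] assms that by (simp add: f_def C_def)
  then have "integral {0..1/4} f \<le> C * (1 + 4*u) * (1/4 / (1 + u * (1/4)))"
    using has_integral_le[OF integrable_integral majorant] assms
    by (cases "f integrable_on {0..1/4}") (auto simp: not_integrable_integral C_def)
  also have "\<dots> = C * ((1 + 4*u) / (4 + u))"
    by (simp add: field_simps)
  also have "\<dots> \<le> C * 4"
    using assms by (intro mult_left_mono) (auto simp: C_def divide_simps)
  finally show ?thesis
    using calB_eq by (simp add: C_def)
qed

lemma bdd_above_calB:
  assumes "1 + real d / 2 \<le> n"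
  shows "bdd_above (calB n d ` {0..})"
  using calB_le[OF assms] by (intro bdd_aboveI2) auto

lemma Bnd_nonneg:
  assumes "1 + real d / 2 \<le> n"
  shows "0 \<le> Bnd n d"
  unfolding Bnd_def using bdd_above_calB[OF assms] calB_nonneg
  by (intro cSUP_upper2[of _ _ 0]) auto

lemma Bnd_le:
  assumes "1 + real d / 2 \<le> n"
  shows "Bnd n d \<le> 8 * 5 powr (real d / 2) * (16/15) powr (n - 1 - real d / 2)"
  unfolding Bnd_def using calB_le[OF assms] by (intro cSUP_least) auto

theorem lemma4p3:
  fixes d :: nat
  assumes "d \<ge> 1"
  shows "(\<forall>\<^sub>F n in at_top. bdd_above (calB n d ` {0..}))
       \<and> (\<lambda>n. Bnd n d) \<in> O[at_top](\<lambda>n. n powr (-1/2) * (9/8) powr n)"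
proof
  have large: "\<forall>\<^sub>F n in at_top. 1 + real d / 2 \<le> n"
    by (rule eventually_ge_at_top)
  then show "\<forall>\<^sub>F n in at_top. bdd_above (calB n d ` {0..})"
    by eventually_elim (rule bdd_above_calB)
  have "\<forall>\<^sub>F n in at_top.
      norm (Bnd n d) \<le> 1 * norm (8 * 5 powr (real d / 2) * (16/15) powr (n - 1 - real d / 2))"
    using large by eventually_elim (use Bnd_nonneg Bnd_le in auto)
  then have "(\<lambda>n. Bnd n d) \<in> O[at_top](\<lambda>n. 8 * 5 powr (real d / 2) * (16/15) powr (n - 1 - real d / 2))"
    by (rule bigoI)
  also have "(\<lambda>n. 8 * 5 powr (real d / 2) * (16/15) powr (n - 1 - real d / 2))
      \<in> O[at_top](\<lambda>n. n powr (-1/2) * (9/8) powr n)"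
    by real_asymp
  finally show "(\<lambda>n. Bnd n d) \<in> O[at_top](\<lambda>n. n powr (-1/2) * (9/8) powr n)" .
qed

end
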